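(* If $\mathcal N\in\mathrm{Ch}(A'B',AB)$ is no-signaling from $A'$ to $B$, then $S_\infty[A|B]_{\mathcal N}\ge-\log|A|$.
   Context: All systems are finite-dimensional; $|X|$ denotes dimension; $\log$ base 2; $\mathrm{St}(X)$ density operators; $\mathrm{Ch}(X',X)$ quantum channels. $\mathcal R^{\mathbb 1}_{A'\to A}(X):=\operatorname{tr}(X)\mathbb 1_A$. $D_\infty(\rho\|\sigma):=\log\inf\{\lambda:\rho\le\lambda\sigma\}$; for a channel $\mathcal M$ and CP map $\mathcal M'$, $D_\infty[\mathcal M\|\mathcal M']:=\sup_{\rho\in\mathrm{St}(RX')}D_\infty((\mathrm{id}\otimes\mathcal M)(\rho)\|(\mathrm{id}\otimes\mathcal M')(\rho))$. Conditional channel min-entropy: $S_\infty[A|B]_{\mathcal N}:=-\inf_{\mathcal Q\in\mathrm{Ch}(B',B)}D_\infty[\mathcal N\|\mathcal R^{\mathbb 1}_{A'\to A}\otimes\mathcal Q]$. $\mathcal N$ is no-signaling (semicausal) from $A'$ to $B$ if there is $\mathcal Q^{\mathcal N}\in\mathrm{Ch}(B',B)$ with $\operatorname{tr}_A\circ\mathcal N=\operatorname{tr}_{A'}\otimes\mathcal Q^{\mathcal N}$. *)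

theory Defs
  imports Complex_Main "Jordan_Normal_Form.Matrix" "HOL-Library.Extended_Real"
begin

text \<open>Finite-dimensional quantum systems are given by their dimension d (d \<ge> 1);
operators on a system of dimension d are complex d x d matrices (carrier_mat d d).
For a composite system XY with dims dX, dY the basis index is (x,y) \<mapsto> x * dY + y.\<close>

definition mtrace :: "complex mat \<Rightarrow> complex" where
  "mtrace M = (\<Sum>i<dim_row M. M $$ (i, i))"

definition psd :: "nat \<Rightarrow> complex mat \<Rightarrow> bool" where
  "psd n M \<longleftrightarrow> M \<in> carrier_mat n n \<and> (\<forall>v \<in> carrier_vec n. 0 \<le> (M *\<^sub>v v) \<bullet>c v)"

definition loewner_le :: "nat \<Rightarrow> complex mat \<Rightarrow> complex mat \<Rightarrow> bool" where
  "loewner_le n M N \<longleftrightarrow> M \<in> carrier_mat n n \<and> N \<in> carrier_mat n n \<and> psd n (N - M)"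

definition density :: "nat \<Rightarrow> complex mat \<Rightarrow> bool" where
  "density n \<rho> \<longleftrightarrow> psd n \<rho> \<and> mtrace \<rho> = 1"

definition tensor_mat :: "complex mat \<Rightarrow> complex mat \<Rightarrow> complex mat" where
  "tensor_mat A B = mat (dim_row A * dim_row B) (dim_col A * dim_col B)
     (\<lambda>(i, j). A $$ (i div dim_row B, j div dim_col B) * B $$ (i mod dim_row B, j mod dim_col B))"

definition unit_mat :: "nat \<Rightarrow> nat \<Rightarrow> nat \<Rightarrow> complex mat" where
  "unit_mat n i j = mat n n (\<lambda>(k, l). if k = i \<and> l = j then 1 else 0)"

definition block :: "nat \<Rightarrow> complex mat \<Rightarrow> nat \<Rightarrow> nat \<Rightarrow> complex mat" where
  "block d M a b = mat d d (\<lambda>(k, l). M $$ (a * d + k, b * d + l))"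

text \<open>(id_R \<otimes> M)(\<rho>) for |R| = r, M from dimension d to dimension d'.\<close>
definition id_tensor :: "nat \<Rightarrow> nat \<Rightarrow> nat \<Rightarrow> (complex mat \<Rightarrow> complex mat) \<Rightarrow> complex mat \<Rightarrow> complex mat" where
  "id_tensor r d d' \<M> \<rho> = mat (r * d') (r * d')
     (\<lambda>(i, j). \<M> (block d \<rho> (i div d') (j div d')) $$ (i mod d', j mod d'))"

definition lin_map :: "nat \<Rightarrow> nat \<Rightarrow> (complex mat \<Rightarrow> complex mat) \<Rightarrow> bool" where
  "lin_map d d' \<M> \<longleftrightarrow>
     (\<forall>X \<in> carrier_mat d d. \<M> X \<in> carrier_mat d' d') \<and>
     (\<forall>X \<in> carrier_mat d d. \<forall>Y \<in> carrier_mat d d. \<M> (X + Y) = \<M> X + \<M> Y) \<and>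
     (\<forall>c. \<forall>X \<in> carrier_mat d d. \<M> (c \<cdot>\<^sub>m X) = c \<cdot>\<^sub>m \<M> X)"

definition CP_map :: "nat \<Rightarrow> nat \<Rightarrow> (complex mat \<Rightarrow> complex mat) \<Rightarrow> bool" where
  "CP_map d d' \<M> \<longleftrightarrow> lin_map d d' \<M> \<and>
     (\<forall>r > 0. \<forall>\<rho>. psd (r * d) \<rho> \<longrightarrow> psd (r * d') (id_tensor r d d' \<M> \<rho>))"

definition channel :: "nat \<Rightarrow> nat \<Rightarrow> (complex mat \<Rightarrow> complex mat) \<Rightarrow> bool" where
  "channel d d' \<M> \<longleftrightarrow> CP_map d d' \<M> \<and> (\<forall>X \<in> carrier_mat d d. mtrace (\<M> X) = mtrace X)"

text \<open>Tensor product M1 \<otimes> M2 of linear maps (d1 \<rightarrow> d1', d2 \<rightarrow> d2'), defined by linear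
  extension from matrix units: (M1 \<otimes> M2)(X) = sum X_{(i,k),(j,l)} M1(E_ij) \<otimes> M2(E_kl).\<close>
definition tensor_map :: "nat \<Rightarrow> nat \<Rightarrow> nat \<Rightarrow> nat \<Rightarrow> (complex mat \<Rightarrow> complex mat)
    \<Rightarrow> (complex mat \<Rightarrow> complex mat) \<Rightarrow> complex mat \<Rightarrow> complex mat" where
  "tensor_map d1 d2 d1' d2' \<M>1 \<M>2 X = mat (d1' * d2') (d1' * d2') (\<lambda>(p, q).
     (\<Sum>i<d1. \<Sum>j<d1. \<Sum>k<d2. \<Sum>l<d2.
        X $$ (i * d2 + k, j * d2 + l) *
        tensor_mat (\<M>1 (unit_mat d1 i j)) (\<M>2 (unit_mat d2 k l)) $$ (p, q)))"

definition repl_id :: "nat \<Rightarrow> complex mat \<Rightarrow> complex mat" where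
  "repl_id dA X = mtrace X \<cdot>\<^sub>m 1\<^sub>m dA"

definition ptrace_first :: "nat \<Rightarrow> nat \<Rightarrow> complex mat \<Rightarrow> complex mat" where
  "ptrace_first dX dY M = mat dY dY (\<lambda>(k, l). \<Sum>x<dX. M $$ (x * dY + k, x * dY + l))"

definition ptrace_second :: "nat \<Rightarrow> nat \<Rightarrow> complex mat \<Rightarrow> complex mat" where
  "ptrace_second dX dY M = mat dX dX (\<lambda>(k, l). \<Sum>y<dY. M $$ (k * dY + y, l * dY + y))"

definition D_max :: "nat \<Rightarrow> complex mat \<Rightarrow> complex mat \<Rightarrow> ereal" where
  "D_max n \<rho> \<sigma> =
     (if {c. loewner_le n \<rho> (complex_of_real (c::real) \<cdot>\<^sub>m \<sigma>)} = {} then \<infinity>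
      else ereal (log 2 (Inf {c. loewner_le n \<rho> (complex_of_real (c::real) \<cdot>\<^sub>m \<sigma>)})))"

definition D_max_ch :: "nat \<Rightarrow> nat \<Rightarrow> (complex mat \<Rightarrow> complex mat) \<Rightarrow> (complex mat \<Rightarrow> complex mat) \<Rightarrow> ereal" where
  "D_max_ch d d' \<M> \<M>' =
     (SUP (r, \<rho>) \<in> {(r, \<rho>). r > 0 \<and> density (r * d) \<rho>}.
        D_max (r * d') (id_tensor r d d' \<M> \<rho>) (id_tensor r d d' \<M>' \<rho>))"

text \<open>Conditional channel min-entropy S_\<infinity>[A|B]_N for N \<in> Ch(A'B', AB),
  with dimensions dA' = dA1, dB' = dB1, dA, dB.\<close>
definition S_min_ch :: "nat \<Rightarrow> nat \<Rightarrow> nat \<Rightarrow> nat \<Rightarrow> (complex mat \<Rightarrow> complex mat) \<Rightarrow> ereal" where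
  "S_min_ch dA1 dB1 dA dB \<N> =
     - (INF \<Q> \<in> {\<Q>. channel dB1 dB \<Q>}.
          D_max_ch (dA1 * dB1) (dA * dB) \<N> (tensor_map dA1 dB1 dA dB (repl_id dA) \<Q>))"

definition no_signaling :: "nat \<Rightarrow> nat \<Rightarrow> nat \<Rightarrow> nat \<Rightarrow> (complex mat \<Rightarrow> complex mat) \<Rightarrow> bool" where
  "no_signaling dA1 dB1 dA dB \<N> \<longleftrightarrow>
     (\<exists>\<Q>. channel dB1 dB \<Q> \<and>
        (\<forall>X \<in> carrier_mat (dA1 * dB1) (dA1 * dB1).
           ptrace_first dA dB (\<N> X) = \<Q> (ptrace_first dA1 dB1 X)))"

end

theory Submission
  imports Defs
begin

text \<open>Let \<open>Q\<close> be the channel witnessing that \<open>N\<close> does not signal from \<open>A'\<close> to \<open>B\<close>; it is an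
admissible candidate in the infimum defining \<open>S\<^sub>\<infinity>[A|B]\<close>. For every input state \<open>\<rho>\<close> on \<open>RA'B'\<close>,
put \<open>M = (id\<^sub>R \<otimes> N)(\<rho>)\<close>. The map \<open>R\<^sup>1 \<otimes> Q\<close> equals \<open>1\<^sub>A \<otimes> (Q \<circ> tr\<^sub>A\<^sub>')\<close>, so by no-signaling
\<open>(id\<^sub>R \<otimes> R\<^sup>1 \<otimes> Q)(\<rho>) = 1\<^sub>A \<otimes> tr\<^sub>A M\<close>. Every positive \<open>M\<close> on \<open>RAB\<close> satisfies
\<open>M \<le> |A| (1\<^sub>A \<otimes> tr\<^sub>A M)\<close>, which follows from summing
\<open>0 \<le> (e\<^sub>a - e\<^sub>b)\<^sup>* M (e\<^sub>a - e\<^sub>b)\<close> over all pairs of \<open>A\<close>-blocks. Hence \<open>D\<^sub>\<infinity> \<le> log |A|\<close> for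
every input, and \<open>S\<^sub>\<infinity>[A|B] \<ge> -log |A|\<close>.\<close>

lemma sum_sum_le_card_mult_sum_diag:
  fixes G :: "nat \<Rightarrow> nat \<Rightarrow> complex"
  assumes "\<And>a b. a < n \<Longrightarrow> b < n \<Longrightarrow> 0 \<le> G a a + G b b - G a b - G b a"
  shows "(\<Sum>a<n. \<Sum>b<n. G a b) \<le> of_nat n * (\<Sum>a<n. G a a)"
proof -
  have "0 \<le> (\<Sum>a<n. \<Sum>b<n. G a a + G b b - G a b - G b a)"
    using assms by (intro sum_nonneg) auto
  also have "\<dots> = 2 * (of_nat n * (\<Sum>a<n. G a a) - (\<Sum>a<n. \<Sum>b<n. G a b))"
    by (simp add: sum_subtractf sum.distrib sum.swap[of "\<lambda>a b. G b a"]
        sum.swap[of "\<lambda>a b. G b b"] sum_distrib_left algebra_simps)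
  finally show ?thesis
    by (simp add: less_eq_complex_def)
qed

definition kernel_form :: "nat \<Rightarrow> 'p set \<Rightarrow> (nat \<Rightarrow> 'p \<Rightarrow> nat \<Rightarrow> 'p \<Rightarrow> complex)
    \<Rightarrow> (nat \<Rightarrow> 'p \<Rightarrow> complex) \<Rightarrow> (nat \<Rightarrow> 'p \<Rightarrow> complex) \<Rightarrow> complex" where
  "kernel_form n P K u w = (\<Sum>a<n. \<Sum>p\<in>P. \<Sum>a'<n. \<Sum>p'\<in>P. cnj (u a p) * K a p a' p' * w a' p')"

lemma kernel_form_diff_left:
  "kernel_form n P K (\<lambda>a p. u a p - v a p) w = kernel_form n P K u w - kernel_form n P K v w"
  by (simp add: kernel_form_def sum_subtractf[symmetric] algebra_simps)

lemma kernel_form_diff_right: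
  "kernel_form n P K u (\<lambda>a p. v a p - w a p) = kernel_form n P K u v - kernel_form n P K u w"
  by (simp add: kernel_form_def sum_subtractf[symmetric] algebra_simps)

lemma kernel_form_scale_diff_kernel:
  "kernel_form n P (\<lambda>a p a' p'. c * K a p a' p' - L a p a' p') u w
    = c * kernel_form n P K u w - kernel_form n P L u w"
  by (simp add: kernel_form_def sum_subtractf[symmetric] sum_distrib_left algebra_simps)

lemma kernel_form_cong:
  assumes "\<And>a p a' p'. a < n \<Longrightarrow> p \<in> P \<Longrightarrow> a' < n \<Longrightarrow> p' \<in> P \<Longrightarrow> K a p a' p' = K' a p a' p'"
    and "\<And>a p. a < n \<Longrightarrow> p \<in> P \<Longrightarrow> u a p = u' a p"
    and "\<And>a p. a < n \<Longrightarrow> p \<in> P \<Longrightarrow> w a p = w' a p"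
  shows "kernel_form n P K u w = kernel_form n P K' u' w'"
  unfolding kernel_form_def using assms by (intro sum.cong refl) auto

lemma kernel_form_single_blocks:
  assumes "c < n" "c' < n"
  shows "kernel_form n P K (\<lambda>a p. if a = c then u p else 0) (\<lambda>a p. if a = c' then w p else 0)
     = (\<Sum>p\<in>P. \<Sum>p'\<in>P. cnj (u p) * K c p c' p' * w p')"
proof -
  have "kernel_form n P K (\<lambda>a p. if a = c then u p else 0) (\<lambda>a p. if a = c' then w p else 0)
     = (\<Sum>a<n. \<Sum>p\<in>P. \<Sum>a'<n.
          if a = c then if a' = c' then \<Sum>p'\<in>P. cnj (u p) * K c p c' p' * w p' else 0 else 0)"
    unfolding kernel_form_def by (intro sum.cong refl) auto
  also have "\<dots> = (\<Sum>a<n. if a = c then \<Sum>p\<in>P. \<Sum>p'\<in>P. cnj (u p) * K c p c' p' * w p' else 0)"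
    using assms by (intro sum.cong refl) auto
  also have "\<dots> = (\<Sum>p\<in>P. \<Sum>p'\<in>P. cnj (u p) * K c p c' p' * w p')"
    using assms by simp
  finally show ?thesis .
qed

text \<open>For positive \<open>K\<close> on \<open>\<complex>\<^sup>n \<otimes> \<complex>\<^sup>P\<close> this is \<open>K \<le> n (1 \<otimes> tr\<^sub>1 K)\<close>. Off-diagonal blocks are
  controlled through \<open>0 \<le> \<langle>g\<^sub>a - g\<^sub>b, K (g\<^sub>a - g\<^sub>b)\<rangle>\<close>, and each diagonal block \<open>K\<^sub>a\<^sub>a\<close> is one of
  the positive summands of \<open>tr\<^sub>1 K\<close>.\<close>
lemma kernel_form_le_card_mult_ptrace:
  fixes g :: "nat \<Rightarrow> 'p \<Rightarrow> complex"
  assumes pos: "\<And>g. 0 \<le> kernel_form n P K g g"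
  shows "kernel_form n P K g g
    \<le> of_nat n * kernel_form n P (\<lambda>a p a' p'. if a = a' then \<Sum>c<n. K c p c p' else 0) g g"
proof -
  define blk :: "nat \<Rightarrow> nat \<Rightarrow> nat \<Rightarrow> 'p \<Rightarrow> complex"
    where "blk a c = (\<lambda>a' p. if a' = c then g a p else 0)" for a c
  define G where "G a a' = kernel_form n P K (blk a a) (blk a' a')" for a a'
  define E where "E a c = kernel_form n P K (blk a c) (blk a c)" for a c
  have G_eq: "G a a' = (\<Sum>p\<in>P. \<Sum>p'\<in>P. cnj (g a p) * K a p a' p' * g a' p')"
    if "a < n" "a' < n" for a a'
    unfolding G_def blk_def using kernel_form_single_blocks[OF that] .
  have E_eq: "E a c = (\<Sum>p\<in>P. \<Sum>p'\<in>P. cnj (g a p) * K c p c p' * g a p')" if "c < n" for a c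
    unfolding E_def blk_def using kernel_form_single_blocks[OF that that] .
  have "kernel_form n P K g g = (\<Sum>a<n. \<Sum>a'<n. G a a')"
    unfolding kernel_form_def by (intro sum.cong refl) (subst sum.swap, simp add: G_eq)
  also have "\<dots> \<le> of_nat n * (\<Sum>a<n. G a a)"
  proof (rule sum_sum_le_card_mult_sum_diag)
    fix a b
    have "0 \<le> kernel_form n P K (\<lambda>x p. blk a a x p - blk b b x p) (\<lambda>x p. blk a a x p - blk b b x p)"
      by (rule pos)
    also have "\<dots> = G a a + G b b - G a b - G b a"
      unfolding G_def by (simp add: kernel_form_diff_left kernel_form_diff_right)
    finally show "0 \<le> G a a + G b b - G a b - G b a" .
  qed
  also have "(\<Sum>a<n. G a a) \<le> (\<Sum>a<n. \<Sum>c<n. E a c)"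
  proof (rule sum_mono)
    fix a assume "a \<in> {..<n}"
    then have "(\<Sum>c<n. E a c) = E a a + (\<Sum>c\<in>{..<n} - {a}. E a c)"
      by (simp add: sum.remove)
    moreover have "0 \<le> (\<Sum>c\<in>{..<n} - {a}. E a c)"
      unfolding E_def by (intro sum_nonneg pos)
    ultimately show "G a a \<le> (\<Sum>c<n. E a c)"
      by (simp add: E_def G_def)
  qed
  also have "(\<Sum>a<n. \<Sum>c<n. E a c)
      = (\<Sum>a<n. \<Sum>p\<in>P. \<Sum>p'\<in>P. cnj (g a p) * (\<Sum>c<n. K c p c p') * g a p')"
  proof (intro sum.cong refl)
    fix a
    have "(\<Sum>c<n. E a c) = (\<Sum>c<n. \<Sum>p\<in>P. \<Sum>p'\<in>P. cnj (g a p) * K c p c p' * g a p')"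
      by (simp add: E_eq)
    also have "\<dots> = (\<Sum>p\<in>P. \<Sum>p'\<in>P. \<Sum>c<n. cnj (g a p) * K c p c p' * g a p')"
      by (subst sum.swap, intro sum.cong refl, rule sum.swap)
    finally show "(\<Sum>c<n. E a c) = (\<Sum>p\<in>P. \<Sum>p'\<in>P. cnj (g a p) * (\<Sum>c<n. K c p c p') * g a p')"
      by (simp add: sum_distrib_left sum_distrib_right)
  qed
  also have "\<dots> = kernel_form n P (\<lambda>a p a' p'. if a = a' then \<Sum>c<n. K c p c p' else 0) g g"
  proof -
    have "kernel_form n P (\<lambda>a p a' p'. if a = a' then \<Sum>c<n. K c p c p' else 0) g g
      = (\<Sum>a<n. \<Sum>p\<in>P. \<Sum>a'<n. \<Sum>p'\<in>P.
           if a' = a then cnj (g a p) * (\<Sum>c<n. K c p c p') * g a p' else 0)"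
      unfolding kernel_form_def by (intro sum.cong refl) auto
    also have "\<dots> = (\<Sum>a<n. \<Sum>p\<in>P. \<Sum>p'\<in>P. cnj (g a p) * (\<Sum>c<n. K c p c p') * g a p')"
      by (intro sum.cong refl) (subst sum.swap, simp)
    finally show ?thesis by simp
  qed
  finally show ?thesis
    by (simp add: less_eq_complex_def mult_left_mono)
qed

lemma cscalar_prod_mult_mat_vec_eq_sum:
  assumes "M \<in> carrier_mat n n" "v \<in> carrier_vec n"
  shows "(M *\<^sub>v v) \<bullet>c v = (\<Sum>i<n. \<Sum>j<n. cnj (v $ i) * M $$ (i, j) * v $ j)"
  using assms
  by (simp add: scalar_prod_def atLeast0LessThan row_def sum_distrib_left sum_distrib_right mult_ac)

lemma psd_iff_sum_form:
  "psd n M \<longleftrightarrow> M \<in> carrier_mat n n \<and> (\<forall>f. 0 \<le> (\<Sum>i<n. \<Sum>j<n. cnj (f i) * M $$ (i, j) * f j))"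
proof (intro iffI conjI allI)
  assume "psd n M"
  then show M: "M \<in> carrier_mat n n"
    unfolding psd_def by blast
  fix f :: "nat \<Rightarrow> complex"
  have "\<forall>v \<in> carrier_vec n. 0 \<le> (M *\<^sub>v v) \<bullet>c v"
    using \<open>psd n M\<close> unfolding psd_def by blast
  then have "0 \<le> (M *\<^sub>v vec n f) \<bullet>c vec n f"
    by simp
  also have "\<dots> = (\<Sum>i<n. \<Sum>j<n. cnj (f i) * M $$ (i, j) * f j)"
    by (simp add: cscalar_prod_mult_mat_vec_eq_sum[OF M])
  finally show "0 \<le> (\<Sum>i<n. \<Sum>j<n. cnj (f i) * M $$ (i, j) * f j)" .
next
  assume "M \<in> carrier_mat n n \<and> (\<forall>f. 0 \<le> (\<Sum>i<n. \<Sum>j<n. cnj (f i) * M $$ (i, j) * f j))"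
  then show "psd n M"
    unfolding psd_def using cscalar_prod_mult_mat_vec_eq_sum by auto
qed

lemma psd_diag_nonneg:
  assumes "psd n M" "i < n"
  shows "0 \<le> M $$ (i, i)"
proof -
  define e :: "nat \<Rightarrow> complex" where "e k = of_bool (k = i)" for k
  have "0 \<le> (\<Sum>k<n. \<Sum>l<n. cnj (e k) * M $$ (k, l) * e l)"
    using assms(1) unfolding psd_iff_sum_form by blast
  also have "\<dots> = (\<Sum>k<n. \<Sum>l<n. if l = i then if k = i then M $$ (i, i) else 0 else 0)"
    unfolding e_def by (intro sum.cong refl) auto
  also have "\<dots> = M $$ (i, i)"
    using assms(2) by simp
  finally show ?thesis .
qed

lemma psd_mtrace_nonneg:
  assumes "psd n M"
  shows "0 \<le> mtrace M"
proof -
  have "0 \<le> (\<Sum>i<n. M $$ (i, i))"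
    using psd_diag_nonneg[OF assms] by (intro sum_nonneg) simp
  also have "\<dots> = mtrace M"
    using assms unfolding psd_def mtrace_def by auto
  finally show ?thesis .
qed

lemma mult_add_less_mult:
  fixes x k r d :: nat
  assumes "x < r" "k < d"
  shows "x * d + k < r * d"
proof -
  have "x * d + k < Suc x * d"
    using assms(2) by simp
  also have "\<dots> \<le> r * d"
    using assms(1) by (intro mult_right_mono) auto
  finally show ?thesis .
qed

lemma sum_lessThan_mult:
  fixes r d :: nat
  shows "(\<Sum>i<r * d. f i) = (\<Sum>x<r. \<Sum>k<d. f (x * d + k))"
proof -
  have "sum f {x * d..<x * d + d} = (\<Sum>k<d. f (x * d + k))" for x
    using sum.shift_bounds_nat_ivl[of f 0 "x * d" d] by (simp add: atLeast0LessThan add.commute)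
  then show ?thesis
    using sum.nat_group[of f d r] by simp
qed

text \<open>Position of the basis vector \<open>|x\<rangle>|a\<rangle>|b\<rangle>\<close> of \<open>R \<otimes> A \<otimes> B\<close>, where \<open>xb = (x, b)\<close>: the
  \<open>A\<close>-index is split off because it is the factor traced out below.\<close>
definition index3 :: "nat \<Rightarrow> nat \<Rightarrow> nat \<Rightarrow> nat \<times> nat \<Rightarrow> nat" where
  "index3 dA dB a xb = fst xb * (dA * dB) + (a * dB + snd xb)"

lemma index3_less:
  assumes "a < dA" "xb \<in> {..<r} \<times> {..<dB}"
  shows "index3 dA dB a xb < r * (dA * dB)"
  using assms unfolding index3_def by (auto intro!: mult_add_less_mult)

lemma index3_components:
  assumes "a < dA" "xb \<in> {..<r} \<times> {..<dB}"
  shows "index3 dA dB a xb div (dA * dB) = fst xb"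
    and "index3 dA dB a xb mod (dA * dB) div dB = a"
    and "index3 dA dB a xb mod (dA * dB) mod dB = snd xb"
proof -
  have "a * dB + snd xb < dA * dB"
    using assms by (auto intro!: mult_add_less_mult)
  then show "index3 dA dB a xb div (dA * dB) = fst xb"
    and "index3 dA dB a xb mod (dA * dB) div dB = a"
    and "index3 dA dB a xb mod (dA * dB) mod dB = snd xb"
    using assms unfolding index3_def by auto
qed

lemma sum_lessThan_index3:
  "(\<Sum>i<r * (dA * dB). F i) = (\<Sum>a<dA. \<Sum>xb\<in>{..<r} \<times> {..<dB}. F (index3 dA dB a xb))"
proof -
  have "(\<Sum>i<r * (dA * dB). F i) = (\<Sum>x<r. \<Sum>a<dA. \<Sum>b<dB. F (x * (dA * dB) + (a * dB + b)))"
    by (simp add: sum_lessThan_mult)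
  also have "\<dots> = (\<Sum>a<dA. \<Sum>x<r. \<Sum>b<dB. F (x * (dA * dB) + (a * dB + b)))"
    by (rule sum.swap)
  also have "\<dots> = (\<Sum>a<dA. \<Sum>xb\<in>{..<r} \<times> {..<dB}. F (index3 dA dB a xb))"
    by (simp add: sum.cartesian_product index3_def case_prod_beta)
  finally show ?thesis .
qed

lemma sum_form_eq_kernel_form:
  "(\<Sum>i<r * (dA * dB). \<Sum>j<r * (dA * dB). cnj (f i) * A $$ (i, j) * f j)
    = kernel_form dA ({..<r} \<times> {..<dB}) (\<lambda>a p a' p'. A $$ (index3 dA dB a p, index3 dA dB a' p'))
        (\<lambda>a p. f (index3 dA dB a p)) (\<lambda>a p. f (index3 dA dB a p))"
  by (simp add: kernel_form_def sum_lessThan_index3)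

text \<open>The hypothesis on \<open>T\<close> says \<open>T = 1\<^sub>A \<otimes> tr\<^sub>A M\<close> on \<open>R \<otimes> A \<otimes> B\<close>.\<close>
lemma loewner_le_dim_mult_ptrace:
  assumes M: "psd (r * (dA * dB)) M" and T: "T \<in> carrier_mat (r * (dA * dB)) (r * (dA * dB))"
    and T_entry: "\<And>a a' p p'. a < dA \<Longrightarrow> a' < dA \<Longrightarrow>
      p \<in> {..<r} \<times> {..<dB} \<Longrightarrow> p' \<in> {..<r} \<times> {..<dB} \<Longrightarrow>
      T $$ (index3 dA dB a p, index3 dA dB a' p')
        = (if a = a' then \<Sum>c<dA. M $$ (index3 dA dB c p, index3 dA dB c p') else 0)"
  shows "loewner_le (r * (dA * dB)) M (of_nat dA \<cdot>\<^sub>m T)"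
proof -
  define P where "P = {..<r} \<times> {..<dB}"
  define KM where "KM a p a' p' = M $$ (index3 dA dB a p, index3 dA dB a' p')" for a p a' p'
  have M_carrier: "M \<in> carrier_mat (r * (dA * dB)) (r * (dA * dB))"
    using M unfolding psd_def by blast
  have KM_pos: "0 \<le> kernel_form dA P KM g g" for g
  proof -
    define f where "f i = g (i mod (dA * dB) div dB) (i div (dA * dB), i mod (dA * dB) mod dB)" for i
    have "0 \<le> (\<Sum>i<r * (dA * dB). \<Sum>j<r * (dA * dB). cnj (f i) * M $$ (i, j) * f j)"
      using M unfolding psd_iff_sum_form by blast
    also have "\<dots> = kernel_form dA P KM (\<lambda>a p. f (index3 dA dB a p)) (\<lambda>a p. f (index3 dA dB a p))"
      unfolding sum_form_eq_kernel_form KM_def P_def ..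
    also have "\<dots> = kernel_form dA P KM g g"
      by (rule kernel_form_cong) (auto simp: f_def P_def index3_components)
    finally show ?thesis .
  qed
  have "psd (r * (dA * dB)) (of_nat dA \<cdot>\<^sub>m T - M)"
    unfolding psd_iff_sum_form
  proof (intro conjI allI)
    show "of_nat dA \<cdot>\<^sub>m T - M \<in> carrier_mat (r * (dA * dB)) (r * (dA * dB))"
      using T M_carrier by (simp add: minus_carrier_mat)
    fix f :: "nat \<Rightarrow> complex"
    define g where "g a p = f (index3 dA dB a p)" for a p
    have "0 \<le> of_nat dA
          * kernel_form dA P (\<lambda>a p a' p'. if a = a' then \<Sum>c<dA. KM c p c p' else 0) g g
        - kernel_form dA P KM g g"
      using kernel_form_le_card_mult_ptrace[OF KM_pos] by simp
    also have "\<dots> = kernel_form dA P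
        (\<lambda>a p a' p'. (of_nat dA \<cdot>\<^sub>m T - M) $$ (index3 dA dB a p, index3 dA dB a' p')) g g"
      unfolding kernel_form_scale_diff_kernel[symmetric]
      using T M_carrier by (intro kernel_form_cong) (auto simp: P_def KM_def T_entry index3_less)
    also have "\<dots> = (\<Sum>i<r * (dA * dB). \<Sum>j<r * (dA * dB). cnj (f i) * (of_nat dA \<cdot>\<^sub>m T - M) $$ (i, j) * f j)"
      unfolding sum_form_eq_kernel_form g_def P_def ..
    finally show "0 \<le> \<dots>" .
  qed
  then show ?thesis
    unfolding loewner_le_def using T M_carrier by simp
qed

lemma lin_map_entry_expand:
  assumes lin: "lin_map d d' Q" and Y: "Y \<in> carrier_mat d d" and pq: "p < d'" "q < d'"
  shows "Q Y $$ (p, q) = (\<Sum>k<d. \<Sum>l<d. Y $$ (k, l) * Q (unit_mat d k l) $$ (p, q))"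
proof -
  have Q_carrier: "\<And>X. X \<in> carrier_mat d d \<Longrightarrow> Q X \<in> carrier_mat d' d'"
    and Q_add: "\<And>X Z. X \<in> carrier_mat d d \<Longrightarrow> Z \<in> carrier_mat d d \<Longrightarrow> Q (X + Z) = Q X + Q Z"
    and Q_smult: "\<And>c X. X \<in> carrier_mat d d \<Longrightarrow> Q (c \<cdot>\<^sub>m X) = c \<cdot>\<^sub>m Q X"
    using lin unfolding lin_map_def by auto
  define restr where "restr S = mat d d (\<lambda>(k, l). if (k, l) \<in> S then Y $$ (k, l) else 0)" for S
  have restr_carrier: "restr S \<in> carrier_mat d d" for S
    unfolding restr_def by simp
  have unit_carrier: "unit_mat d k l \<in> carrier_mat d d" for k l
    unfolding unit_mat_def by simp
  have expand: "Q (restr S) $$ (p, q) = (\<Sum>(k, l)\<in>S. Y $$ (k, l) * Q (unit_mat d k l) $$ (p, q))"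
    if "finite S" "S \<subseteq> {..<d} \<times> {..<d}" for S
    using that
  proof (induction S rule: finite_induct)
    case empty
    have "restr {} = 0 \<cdot>\<^sub>m restr {}"
      unfolding restr_def by (rule eq_matI) auto
    then have "Q (restr {}) = 0 \<cdot>\<^sub>m Q (restr {})"
      using Q_smult[OF restr_carrier] by metis
    then have "Q (restr {}) $$ (p, q) = 0"
      using Q_carrier[OF restr_carrier, of "{}"] pq
      by (metis carrier_matD index_smult_mat(1) mult_zero_left)
    then show ?case
      by simp
  next
    case (insert s S)
    obtain k l where s: "s = (k, l)"
      by (cases s)
    have "restr (insert s S) = restr S + Y $$ (k, l) \<cdot>\<^sub>m unit_mat d k l"
      unfolding restr_def unit_mat_def s using insert s by (intro eq_matI) auto
    then have "Q (restr (insert s S)) = Q (restr S) + Y $$ (k, l) \<cdot>\<^sub>m Q (unit_mat d k l)"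
      using Q_add[OF restr_carrier, of "Y $$ (k, l) \<cdot>\<^sub>m unit_mat d k l" S] Q_smult[OF unit_carrier]
        unit_carrier by simp
    then have "Q (restr (insert s S)) $$ (p, q) = Q (restr S) $$ (p, q) + Y $$ (k, l) * Q (unit_mat d k l) $$ (p, q)"
      using Q_carrier[OF restr_carrier, of S] Q_carrier[OF unit_carrier, of k l] pq by simp
    then show ?case
      using insert s by simp
  qed
  have "restr ({..<d} \<times> {..<d}) = Y"
    unfolding restr_def using Y by (intro eq_matI) auto
  then show ?thesis
    using expand[of "{..<d} \<times> {..<d}"] by (simp add: sum.cartesian_product)
qed

lemma mtrace_unit_mat: "i < n \<Longrightarrow> j < n \<Longrightarrow> mtrace (unit_mat n i j) = of_bool (i = j)"
  unfolding mtrace_def unit_mat_def by (cases "i = j") (auto intro!: sum.neutral)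

lemma tensor_map_repl_id_entry:
  assumes Q: "lin_map dB1 dB Q" and a: "a < dA" "a' < dA" and b: "b < dB" "b' < dB"
  shows "tensor_map dA1 dB1 dA dB (repl_id dA) Q X $$ (a * dB + b, a' * dB + b')
    = (if a = a' then Q (ptrace_first dA1 dB1 X) $$ (b, b') else 0)"
proof -
  have Q_unit_carrier: "Q (unit_mat dB1 k l) \<in> carrier_mat dB dB" for k l
    using Q unfolding lin_map_def unit_mat_def by simp
  have unit_entry: "tensor_mat (repl_id dA (unit_mat dA1 i j)) (Q (unit_mat dB1 k l)) $$ (a * dB + b, a' * dB + b')
      = (if j = i then if a = a' then Q (unit_mat dB1 k l) $$ (b, b') else 0 else 0)"
    if "i < dA1" "j < dA1" for i j k l
    using that a b Q_unit_carrier[of k l]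
    by (auto simp: tensor_mat_def repl_id_def mtrace_unit_mat mult_add_less_mult)
  have "tensor_map dA1 dB1 dA dB (repl_id dA) Q X $$ (a * dB + b, a' * dB + b')
      = (\<Sum>i<dA1. \<Sum>j<dA1. \<Sum>k<dB1. \<Sum>l<dB1. X $$ (i * dB1 + k, j * dB1 + l) *
          tensor_mat (repl_id dA (unit_mat dA1 i j)) (Q (unit_mat dB1 k l)) $$ (a * dB + b, a' * dB + b'))"
    unfolding tensor_map_def using a b by (simp add: mult_add_less_mult)
  also have "\<dots> = (\<Sum>i<dA1. \<Sum>j<dA1. \<Sum>k<dB1. \<Sum>l<dB1. if j = i then if a = a' then
      X $$ (i * dB1 + k, i * dB1 + l) * Q (unit_mat dB1 k l) $$ (b, b') else 0 else 0)"
    by (intro sum.cong refl) (simp add: unit_entry)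
  also have "\<dots> = (\<Sum>i<dA1. \<Sum>j<dA1. if j = i then if a = a' then \<Sum>k<dB1. \<Sum>l<dB1.
      X $$ (i * dB1 + k, i * dB1 + l) * Q (unit_mat dB1 k l) $$ (b, b') else 0 else 0)"
    by (intro sum.cong refl) (cases "j = i"; simp)
  also have "\<dots> = (if a = a' then \<Sum>i<dA1. \<Sum>k<dB1. \<Sum>l<dB1.
      X $$ (i * dB1 + k, i * dB1 + l) * Q (unit_mat dB1 k l) $$ (b, b') else 0)"
    by simp
  also have "(\<Sum>i<dA1. \<Sum>k<dB1. \<Sum>l<dB1. X $$ (i * dB1 + k, i * dB1 + l) * Q (unit_mat dB1 k l) $$ (b, b'))
      = (\<Sum>k<dB1. \<Sum>l<dB1. \<Sum>i<dA1. X $$ (i * dB1 + k, i * dB1 + l) * Q (unit_mat dB1 k l) $$ (b, b'))"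
    by (subst sum.swap, rule sum.cong[OF refl], rule sum.swap)
  also have "\<dots> = (\<Sum>k<dB1. \<Sum>l<dB1. ptrace_first dA1 dB1 X $$ (k, l) * Q (unit_mat dB1 k l) $$ (b, b'))"
    unfolding ptrace_first_def by (simp add: sum_distrib_right)
  also have "\<dots> = Q (ptrace_first dA1 dB1 X) $$ (b, b')"
    using b by (intro lin_map_entry_expand[OF Q, symmetric]) (simp add: ptrace_first_def)
  finally show ?thesis .
qed

lemma id_tensor_entry:
  assumes "x < r" "x' < r" "k < d'" "l < d'"
  shows "id_tensor r d d' N \<rho> $$ (x * d' + k, x' * d' + l) = N (block d \<rho> x x') $$ (k, l)"
  using assms unfolding id_tensor_def by (simp add: mult_add_less_mult)

lemma mtrace_id_tensor:
  assumes N: "channel d d' N" and \<rho>: "\<rho> \<in> carrier_mat (r * d) (r * d)"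
  shows "mtrace (id_tensor r d d' N \<rho>) = mtrace \<rho>"
proof -
  have N_block: "dim_row (N (block d \<rho> x x)) = d'" "mtrace (N (block d \<rho> x x)) = mtrace (block d \<rho> x x)"
    for x
    using N unfolding channel_def CP_map_def lin_map_def block_def carrier_mat_def by auto
  have "dim_row (id_tensor r d d' N \<rho>) = r * d'"
    by (simp add: id_tensor_def)
  then have "mtrace (id_tensor r d d' N \<rho>) = (\<Sum>x<r. \<Sum>k<d'. id_tensor r d d' N \<rho> $$ (x * d' + k, x * d' + k))"
    unfolding mtrace_def by (simp only: sum_lessThan_mult)
  also have "\<dots> = (\<Sum>x<r. \<Sum>k<d'. N (block d \<rho> x x) $$ (k, k))"
    by (intro sum.cong refl) (simp add: id_tensor_entry)
  also have "\<dots> = (\<Sum>x<r. mtrace (N (block d \<rho> x x)))"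
    using N_block(1) unfolding mtrace_def by simp
  also have "\<dots> = (\<Sum>x<r. mtrace (block d \<rho> x x))"
    using N_block(2) by simp
  also have "\<dots> = mtrace \<rho>"
    using \<rho> unfolding mtrace_def block_def by (simp add: sum_lessThan_mult)
  finally show ?thesis .
qed

lemma D_max_le_log:
  assumes le: "loewner_le n \<rho> (complex_of_real c \<cdot>\<^sub>m \<sigma>)" and c: "c > 0" and tr: "mtrace \<rho> = 1"
  shows "D_max n \<rho> \<sigma> \<le> ereal (log 2 c)"
proof -
  define S where "S = {c :: real. loewner_le n \<rho> (complex_of_real c \<cdot>\<^sub>m \<sigma>)}"
  have "c \<in> S"
    using le S_def by simp
  have \<sigma>: "\<sigma> \<in> carrier_mat n n" and \<rho>: "\<rho> \<in> carrier_mat n n"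
    using le unfolding loewner_le_def carrier_mat_def by auto
  define t where "t = Re (mtrace \<sigma>)"
  have trace_bound: "1 \<le> c' * t" if "c' \<in> S" for c'
  proof -
    have "0 \<le> mtrace (complex_of_real c' \<cdot>\<^sub>m \<sigma> - \<rho>)"
      using that unfolding S_def loewner_le_def by (blast intro: psd_mtrace_nonneg)
    also have "mtrace (complex_of_real c' \<cdot>\<^sub>m \<sigma> - \<rho>) = complex_of_real c' * mtrace \<sigma> - 1"
      unfolding mtrace_def using \<sigma> \<rho> tr[unfolded mtrace_def]
      by (simp add: sum_subtractf sum_distrib_left)
    finally show ?thesis
      unfolding t_def by (simp add: less_eq_complex_def)
  qed
  have "t > 0"
    using trace_bound[OF \<open>c \<in> S\<close>] c by (smt (verit) mult_nonneg_nonpos)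
  then have lower: "1 / t \<le> c'" if "c' \<in> S" for c'
    using trace_bound[OF that] by (simp add: divide_le_eq)
  then have "Inf S \<le> c" and "1 / t \<le> Inf S"
    using \<open>c \<in> S\<close> by (auto intro: cInf_lower bdd_belowI[OF lower] cInf_greatest)
  moreover have "0 < Inf S"
    using \<open>t > 0\<close> \<open>1 / t \<le> Inf S\<close> by (meson less_le_trans zero_less_divide_1_iff)
  moreover have "D_max n \<rho> \<sigma> = ereal (log 2 (Inf S))"
    unfolding D_max_def S_def[symmetric] using \<open>c \<in> S\<close> by auto
  ultimately show ?thesis
    by simp
qed

lemma D_max_le_log_dim_if_no_signaling:
  assumes N: "channel (dA1 * dB1) (dA * dB) N" and Q: "channel dB1 dB Q"
    and no_sig: "\<And>X. X \<in> carrier_mat (dA1 * dB1) (dA1 * dB1) \<Longrightarrow>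
      ptrace_first dA dB (N X) = Q (ptrace_first dA1 dB1 X)"
    and "dA > 0" "r > 0" and \<rho>: "density (r * (dA1 * dB1)) \<rho>"
  shows "D_max (r * (dA * dB)) (id_tensor r (dA1 * dB1) (dA * dB) N \<rho>)
    (id_tensor r (dA1 * dB1) (dA * dB) (tensor_map dA1 dB1 dA dB (repl_id dA) Q) \<rho>) \<le> ereal (log 2 (real dA))"
proof -
  define M where "M = id_tensor r (dA1 * dB1) (dA * dB) N \<rho>"
  define T where "T = id_tensor r (dA1 * dB1) (dA * dB) (tensor_map dA1 dB1 dA dB (repl_id dA) Q) \<rho>"
  have \<rho>_psd: "psd (r * (dA1 * dB1)) \<rho>" and "mtrace \<rho> = 1"
    using \<rho> unfolding density_def by auto
  then have "mtrace M = 1"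
    unfolding M_def psd_def using mtrace_id_tensor[OF N] by simp
  have "psd (r * (dA * dB)) M"
    using N \<rho>_psd \<open>r > 0\<close> unfolding M_def channel_def CP_map_def by blast
  have block_carrier: "block (dA1 * dB1) \<rho> x x' \<in> carrier_mat (dA1 * dB1) (dA1 * dB1)" for x x'
    unfolding block_def by simp
  have Q_lin: "lin_map dB1 dB Q"
    using Q unfolding channel_def CP_map_def by blast
  have "T $$ (index3 dA dB a p, index3 dA dB a' p')
      = (if a = a' then \<Sum>c<dA. M $$ (index3 dA dB c p, index3 dA dB c p') else 0)"
    if a: "a < dA" "a' < dA" and p_mem: "p \<in> {..<r} \<times> {..<dB}" "p' \<in> {..<r} \<times> {..<dB}" for a a' p p'
  proof -
    obtain x b x' b' where p: "p = (x, b)" "x < r" "b < dB" and p': "p' = (x', b')" "x' < r" "b' < dB"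
      using p_mem by auto
    have "T $$ (index3 dA dB a p, index3 dA dB a' p')
        = tensor_map dA1 dB1 dA dB (repl_id dA) Q (block (dA1 * dB1) \<rho> x x') $$ (a * dB + b, a' * dB + b')"
      unfolding T_def index3_def p p' using a p p' by (simp add: id_tensor_entry mult_add_less_mult)
    also have "\<dots> = (if a = a' then ptrace_first dA dB (N (block (dA1 * dB1) \<rho> x x')) $$ (b, b') else 0)"
      using a p p' by (simp add: tensor_map_repl_id_entry[OF Q_lin] no_sig[OF block_carrier])
    also have "\<dots> = (if a = a' then \<Sum>c<dA. M $$ (index3 dA dB c p, index3 dA dB c p') else 0)"
      unfolding M_def index3_def ptrace_first_def p p' using p p'
      by (simp add: id_tensor_entry mult_add_less_mult)
    finally show ?thesis .
  qed
  moreover have "T \<in> carrier_mat (r * (dA * dB)) (r * (dA * dB))"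
    unfolding T_def id_tensor_def by simp
  ultimately have "loewner_le (r * (dA * dB)) M (complex_of_real (real dA) \<cdot>\<^sub>m T)"
    using loewner_le_dim_mult_ptrace[OF \<open>psd (r * (dA * dB)) M\<close>] by simp
  then show ?thesis
    unfolding M_def T_def using D_max_le_log \<open>dA > 0\<close> \<open>mtrace M = 1\<close>[unfolded M_def] by simp
qed

theorem proposition12:
  fixes dA1 dB1 dA dB :: nat and \<N> :: "complex mat \<Rightarrow> complex mat"
  assumes "dA1 > 0" "dB1 > 0" "dA > 0" "dB > 0"
    and "channel (dA1 * dB1) (dA * dB) \<N>"
    and "no_signaling dA1 dB1 dA dB \<N>"
  shows "S_min_ch dA1 dB1 dA dB \<N> \<ge> - ereal (log 2 (real dA))"
proof -
  obtain Q where Q: "channel dB1 dB Q" and no_sig: "\<And>X. X \<in> carrier_mat (dA1 * dB1) (dA1 * dB1) \<Longrightarrow>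
      ptrace_first dA dB (\<N> X) = Q (ptrace_first dA1 dB1 X)"
    using assms(6) unfolding no_signaling_def by blast
  have "D_max_ch (dA1 * dB1) (dA * dB) \<N> (tensor_map dA1 dB1 dA dB (repl_id dA) Q) \<le> ereal (log 2 (real dA))"
    unfolding D_max_ch_def
    using D_max_le_log_dim_if_no_signaling[OF assms(5) Q no_sig assms(3)] by (auto intro!: SUP_least)
  then have "(INF \<Q> \<in> {\<Q>. channel dB1 dB \<Q>}.
      D_max_ch (dA1 * dB1) (dA * dB) \<N> (tensor_map dA1 dB1 dA dB (repl_id dA) \<Q>)) \<le> ereal (log 2 (real dA))"
    using Q by (auto intro: INF_lower2)
  then show ?thesis
    unfolding S_min_ch_def by (rule ereal_minus_le_minus[THEN iffD2])
qed

end
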